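(* Let $(M,\varphi,\eta,\xi,g)$ be a Kenmotsu manifold of dimension $2n+1$ with Levi-Civita connection $\nabla$. Let $(U;x^0,x^1,\dots,x^{2n})$ be a local coordinate chart adapted to the foliation generated by $\xi$, so that $\xi=\partial/\partial x^0$ on $U$, and put $\eta_i=\eta(\partial/\partial x^i)$, $\frac{\delta}{\delta x^i}=\frac{\partial}{\partial x^i}-\eta_i\frac{\partial}{\partial x^0}$, $g_{ij}=g\big(\frac{\delta}{\delta x^i},\frac{\delta}{\delta x^j}\big)$ for $i,j=1,\dots,2n$, and let $(g^{kl})$ be the inverse matrix of $(g_{ij})$. Then on $U$: $$\nabla_{\frac{\delta}{\delta x^i}}\frac{\delta}{\delta x^j}=\Gamma_{ij}^k\frac{\delta}{\delta x^k}-g_{ij}\frac{\partial}{\partial x^0},\qquad \nabla_{\frac{\partial}{\partial x^0}}\frac{\delta}{\delta x^i}=\nabla_{\frac{\delta}{\delta x^i}}\frac{\partial}{\partial x^0}=\frac{\delta}{\delta x^i},\qquad \nabla_{\frac{\partial}{\partial x^0}}\frac{\partial}{\partial x^0}=0,$$ where $\Gamma_{ij}^k=\frac12 g^{kl}\Big\{\frac{\delta g_{lj}}{\delta x^i}+\frac{\delta g_{il}}{\delta x^j}-\frac{\delta g_{ij}}{\delta x^l}\Big\}$ (summation over repeated indices).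
   Context: An almost contact metric structure $(\varphi,\eta,\xi,g)$ on a $(2n+1)$-manifold $M$ consists of a $(1,1)$-tensor $\varphi$, a vector field $\xi$, a $1$-form $\eta$ and a Riemannian metric $g$ with $\varphi^2X=-X+\eta(X)\xi$, $\eta(\xi)=1$, $\eta\circ\varphi=0$, $\varphi\xi=0$, $g(\varphi X,\varphi Y)=g(X,Y)-\eta(X)\eta(Y)$, and $\eta(X)=g(\xi,X)$. It is a Kenmotsu manifold if $(\nabla_X\varphi)Y=g(\varphi X,Y)\xi-\eta(Y)\varphi X$ for all vector fields $X,Y$, where $\nabla$ is the Levi-Civita connection of $g$. *)

theory Defs
  imports "HOL-Analysis.Analysis"
begin

text \<open>Everything is expressed in the local coordinates of a chart: the chart domain is
identified with an open set U of real^'m (CARD('m) = 2n+1), coordinate index z plays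
the role of x^0.  Vector fields are maps U -> real^'m (components w.r.t. the coordinate
frame), a (1,1)-tensor field is a matrix-valued map, a 1-form is a covector-valued map
(pairing by the inner product), the metric is a matrix-valued map.\<close>

definition pd :: "'m::finite \<Rightarrow> (real^'m \<Rightarrow> real) \<Rightarrow> real^'m \<Rightarrow> real" where
  "pd a f p = frechet_derivative f (at p) (axis a 1)"

coinductive smooth_fun :: "(real^'m::finite) set \<Rightarrow> (real^'m \<Rightarrow> real) \<Rightarrow> bool" where
  "(\<forall>p\<in>U. f differentiable (at p)) \<Longrightarrow> (\<forall>a. smooth_fun U (pd a f)) \<Longrightarrow> smooth_fun U f"

definition smooth_field :: "(real^'m::finite) set \<Rightarrow> (real^'m \<Rightarrow> real^'m) \<Rightarrow> bool" where
  "smooth_field U Y \<longleftrightarrow> (\<forall>c. smooth_fun U (\<lambda>p. Y p $ c))"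

definition smooth_tensor :: "(real^'m::finite) set \<Rightarrow> (real^'m \<Rightarrow> real^'m^'m) \<Rightarrow> bool" where
  "smooth_tensor U T \<longleftrightarrow> (\<forall>c d. smooth_fun U (\<lambda>p. T p $ c $ d))"

definition metric :: "(real^'m::finite \<Rightarrow> real^'m^'m) \<Rightarrow> real^'m \<Rightarrow> real^'m \<Rightarrow> real^'m \<Rightarrow> real" where
  "metric g p X Y = X \<bullet> (g p *v Y)"

definition riemannian_metric :: "(real^'m::finite) set \<Rightarrow> (real^'m \<Rightarrow> real^'m^'m) \<Rightarrow> bool" where
  "riemannian_metric U g \<longleftrightarrow> smooth_tensor U g \<and>
     (\<forall>p\<in>U. transpose (g p) = g p \<and> (\<forall>X. X \<noteq> 0 \<longrightarrow> metric g p X X > 0))"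

definition christoffel :: "(real^'m::finite \<Rightarrow> real^'m^'m) \<Rightarrow> real^'m \<Rightarrow> 'm \<Rightarrow> 'm \<Rightarrow> 'm \<Rightarrow> real" where
  "christoffel g p c a b = (1/2) * (\<Sum>d\<in>UNIV. matrix_inv (g p) $ c $ d *
     (pd a (\<lambda>q. g q $ d $ b) p + pd b (\<lambda>q. g q $ a $ d) p - pd d (\<lambda>q. g q $ a $ b) p))"

definition lc_nabla :: "(real^'m::finite \<Rightarrow> real^'m^'m) \<Rightarrow> real^'m \<Rightarrow> real^'m \<Rightarrow> (real^'m \<Rightarrow> real^'m) \<Rightarrow> real^'m" where
  "lc_nabla g p X Y = (\<chi> c. (\<Sum>a\<in>UNIV. X $ a * pd a (\<lambda>q. Y q $ c) p)
      + (\<Sum>a\<in>UNIV. \<Sum>b\<in>UNIV. christoffel g p c a b * X $ a * Y p $ b))"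

definition almost_contact_metric ::
  "(real^'m::finite) set \<Rightarrow> (real^'m \<Rightarrow> real^'m^'m) \<Rightarrow> (real^'m \<Rightarrow> real^'m) \<Rightarrow> (real^'m \<Rightarrow> real^'m)
     \<Rightarrow> (real^'m \<Rightarrow> real^'m^'m) \<Rightarrow> bool" where
  "almost_contact_metric U phi xi eta g \<longleftrightarrow>
     riemannian_metric U g \<and> smooth_tensor U phi \<and> smooth_field U xi \<and> smooth_field U eta \<and>
     (\<forall>p\<in>U. \<forall>X Y.
        phi p *v (phi p *v X) = - X + (eta p \<bullet> X) *\<^sub>R xi p \<and>
        eta p \<bullet> xi p = 1 \<and>
        eta p \<bullet> (phi p *v X) = 0 \<and>
        phi p *v xi p = 0 \<and>
        metric g p (phi p *v X) (phi p *v Y) = metric g p X Y - (eta p \<bullet> X) * (eta p \<bullet> Y) \<and>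
        eta p \<bullet> X = metric g p (xi p) X)"

definition kenmotsu ::
  "(real^'m::finite) set \<Rightarrow> (real^'m \<Rightarrow> real^'m^'m) \<Rightarrow> (real^'m \<Rightarrow> real^'m) \<Rightarrow> (real^'m \<Rightarrow> real^'m)
     \<Rightarrow> (real^'m \<Rightarrow> real^'m^'m) \<Rightarrow> bool" where
  "kenmotsu U phi xi eta g \<longleftrightarrow> almost_contact_metric U phi xi eta g \<and>
     (\<forall>p\<in>U. \<forall>X Y. smooth_field U Y \<longrightarrow>
        lc_nabla g p X (\<lambda>q. phi q *v Y q) - phi p *v lc_nabla g p X Y
          = metric g p (phi p *v X) (Y p) *\<^sub>R xi p - (eta p \<bullet> Y p) *\<^sub>R (phi p *v X))"

definition delta_field :: "'m::finite \<Rightarrow> (real^'m \<Rightarrow> real^'m) \<Rightarrow> 'm \<Rightarrow> real^'m \<Rightarrow> real^'m" where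
  "delta_field z eta i p = axis i 1 - (eta p \<bullet> axis i 1) *\<^sub>R axis z 1"

definition delta_deriv :: "'m::finite \<Rightarrow> (real^'m \<Rightarrow> real^'m) \<Rightarrow> 'm \<Rightarrow> (real^'m \<Rightarrow> real) \<Rightarrow> real^'m \<Rightarrow> real" where
  "delta_deriv z eta i f p = pd i f p - (eta p \<bullet> axis i 1) * pd z f p"

definition gbar :: "'m::finite \<Rightarrow> (real^'m \<Rightarrow> real^'m) \<Rightarrow> (real^'m \<Rightarrow> real^'m^'m) \<Rightarrow> real^'m \<Rightarrow> 'm \<Rightarrow> 'm \<Rightarrow> real" where
  "gbar z eta g p i j = metric g p (delta_field z eta i p) (delta_field z eta j p)"

definition Gamma_adapted :: "'m::finite \<Rightarrow> (real^'m \<Rightarrow> real^'m) \<Rightarrow> (real^'m \<Rightarrow> real^'m^'m)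
     \<Rightarrow> (real^'m \<Rightarrow> 'm \<Rightarrow> 'm \<Rightarrow> real) \<Rightarrow> real^'m \<Rightarrow> 'm \<Rightarrow> 'm \<Rightarrow> 'm \<Rightarrow> real" where
  "Gamma_adapted z eta g ginv p i j k = (1/2) * (\<Sum>l\<in>UNIV - {z}. ginv p k l *
     (delta_deriv z eta i (\<lambda>q. gbar z eta g q l j) p
      + delta_deriv z eta j (\<lambda>q. gbar z eta g q i l) p
      - delta_deriv z eta l (\<lambda>q. gbar z eta g q i j) p))"

end

theory Submission
  imports Defs
begin

text \<open>Two identities hold in every Kenmotsu chart: \<nabla>_X \<xi> = X - \<eta>(X) \<xi>, and d\<eta> = 0.
  In an adapted chart \<eta>(\<partial>_0) = 1, so d\<eta> = 0 gives \<partial>_0 \<eta>_i = 0 and hence the fields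
  \<delta>/\<delta>x^i and \<partial>/\<partial>x^0 commute pairwise. Torsion-freeness then gives
  \<nabla>_\<xi> \<delta>_i = \<nabla>_\<delta>_i \<xi> = \<delta>_i; Koszul's formula for this commuting frame yields the
  \<delta>_k-components \<Gamma>^k_ij of \<nabla>_\<delta>_i \<delta>_j, and its \<xi>-component is
  \<eta>(\<nabla>_\<delta>_i \<delta>_j) = \<delta>_i(\<eta>(\<delta>_j)) - g(\<nabla>_\<delta>_i \<xi>, \<delta>_j) = -g_ij.\<close>

lemma pd_cong:
  assumes "open U" "p \<in> U" "\<And>q. q \<in> U \<Longrightarrow> f q = f' q"
  shows "pd a f p = pd a f' p"
proof -
  have "(\<lambda>F. (f has_derivative F) (at p)) = (\<lambda>F. (f' has_derivative F) (at p))"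
    using has_derivative_transform_within_open[OF _ assms(1,2)] assms(3)
    by (metis (no_types, lifting))
  then show ?thesis unfolding pd_def frechet_derivative_def by simp
qed

lemma pd_eq_derivative:
  assumes "(f has_derivative F) (at p)" shows "pd a f p = F (axis a 1)"
  using frechet_derivative_at[OF assms] unfolding pd_def by simp

lemma pd_const [simp]: "pd a (\<lambda>q. c) p = 0"
  unfolding pd_def by simp

lemma pd_diff:
  assumes "f differentiable at p" "h differentiable at p"
  shows "pd a (\<lambda>q. f q - h q) p = pd a f p - pd a h p"
  using pd_eq_derivative[OF has_derivative_diff[OF assms[unfolded frechet_derivative_works]]]
  unfolding pd_def by simp

lemma pd_mult:
  fixes f h :: "real^'m::finite \<Rightarrow> real"
  assumes "f differentiable at p" "h differentiable at p"
  shows "pd a (\<lambda>q. f q * h q) p = f p * pd a h p + pd a f p * h p"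
  using pd_eq_derivative[OF has_derivative_mult[OF assms[unfolded frechet_derivative_works]]]
  unfolding pd_def by simp

lemma pd_sum:
  fixes f :: "'i \<Rightarrow> real^'m::finite \<Rightarrow> real"
  assumes "finite S" "\<And>i. i \<in> S \<Longrightarrow> f i differentiable at p"
  shows "pd a (\<lambda>q. \<Sum>i\<in>S. f i q) p = (\<Sum>i\<in>S. pd a (f i) p)"
proof -
  have "((\<lambda>q. \<Sum>i\<in>S. f i q) has_derivative (\<lambda>v. \<Sum>i\<in>S. frechet_derivative (f i) (at p) v)) (at p)"
    using assms by (intro has_derivative_sum) (simp add: frechet_derivative_works)
  from pd_eq_derivative[OF this] show ?thesis unfolding pd_def by simp
qed

lemma smooth_fun_differentiable: "smooth_fun U f \<Longrightarrow> p \<in> U \<Longrightarrow> f differentiable at p"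
  by (erule smooth_fun.cases) auto

lemma axis_one_nth: "axis i (1::real) $ j = (if j = i then 1 else 0)"
  unfolding axis_def by simp

lemma if_zero_mult:
  "(t::real) * (if P then s else 0) = (if P then t * s else 0)"
  "(if P then s else 0) * (t::real) = (if P then s * t else 0)"
  by auto

lemma sum_swap3:
  "(\<Sum>c\<in>C. \<Sum>a\<in>A. \<Sum>b\<in>B. T c a b) = (\<Sum>a\<in>A. \<Sum>b\<in>B. \<Sum>c\<in>C. T c a b)"
  by (subst sum.swap) (simp only: sum.swap[of _ C])

definition dir_deriv :: "real^'m::finite \<Rightarrow> (real^'m \<Rightarrow> real) \<Rightarrow> real^'m \<Rightarrow> real" where
  "dir_deriv X f p = (\<Sum>a\<in>UNIV. X $ a * pd a f p)"

lemma dir_deriv_axis: "dir_deriv (axis a 1) f p = pd a f p"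
  unfolding dir_deriv_def by (simp add: axis_one_nth if_zero_mult)

lemma dir_deriv_cong:
  assumes "open U" "p \<in> U" "\<And>q. q \<in> U \<Longrightarrow> f q = f' q"
  shows "dir_deriv X f p = dir_deriv X f' p"
  unfolding dir_deriv_def using pd_cong[OF assms] by simp

lemma dir_deriv_const [simp]: "dir_deriv X (\<lambda>q. c) p = 0"
  unfolding dir_deriv_def by simp

definition lie_bracket :: "(real^'m::finite \<Rightarrow> real^'m) \<Rightarrow> (real^'m \<Rightarrow> real^'m) \<Rightarrow> real^'m \<Rightarrow> real^'m" where
  "lie_bracket X Y p = (\<chi> c. dir_deriv (X p) (\<lambda>q. Y q $ c) p - dir_deriv (Y p) (\<lambda>q. X q $ c) p)"

lemma lie_bracket_const [simp]: "lie_bracket (\<lambda>q. u) (\<lambda>q. v) p = 0"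
  unfolding lie_bracket_def by (simp add: vec_eq_iff)

lemma symmetric_matrix_nth: "transpose M = M \<Longrightarrow> M $ a $ b = M $ b $ a"
  by (metis transpose_def vec_lambda_beta)

lemma metric_expand: "metric g q Y W = (\<Sum>c\<in>UNIV. \<Sum>d\<in>UNIV. Y $ c * g q $ c $ d * W $ d)"
  unfolding metric_def inner_vec_def matrix_vector_mult_def
  by (simp add: sum_distrib_left mult.assoc)

lemma metric_sym:
  assumes "transpose (g p) = g p"
  shows "metric g p V W = metric g p W V"
proof -
  have "metric g p V W = (\<Sum>c\<in>UNIV. \<Sum>d\<in>UNIV. W $ d * g p $ d $ c * V $ c)"
    unfolding metric_expand using symmetric_matrix_nth[OF assms] by (simp add: algebra_simps)
  also have "\<dots> = metric g p W V" unfolding metric_expand by (rule sum.swap)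
  finally show ?thesis .
qed

lemma metric_lowered:
  assumes "transpose (g p) = g p"
  shows "metric g p V W = (\<Sum>e\<in>UNIV. (g p *v V) $ e * W $ e)"
  unfolding metric_sym[of g p V W, OF assms] unfolding metric_def inner_vec_def
  by (simp add: mult.commute)

lemma metric_axis_axis: "metric g q (axis i 1) (axis j 1) = g q $ i $ j"
  unfolding metric_expand by (simp add: axis_one_nth if_zero_mult)

lemma metric_diff_left: "metric g p (u - v) w = metric g p u w - metric g p v w"
  unfolding metric_def by (simp add: inner_diff_left)

lemma metric_scale_left: "metric g p (c *\<^sub>R u) w = c * metric g p u w"
  unfolding metric_def by simp

lemma metric_add_right: "metric g p u (v + w) = metric g p u v + metric g p u w"
  unfolding metric_def by (simp add: matrix_vector_right_distrib inner_add_right)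

lemma metric_scale_right: "metric g p u (c *\<^sub>R w) = c * metric g p u w"
  unfolding metric_def by (simp add: matrix_vector_mult_scaleR)

lemma metric_sum_right:
  "metric g p u (\<Sum>k\<in>S. c k *\<^sub>R w k) = (\<Sum>k\<in>S. c k * metric g p u (w k))"
proof (induct S rule: infinite_finite_induct)
  case (insert x F)
  then show ?case
    by (simp add: metric_def matrix_vector_right_distrib inner_add_right matrix_vector_mult_scaleR)
qed (simp_all add: metric_def)

lemma positive_definite_right_inverse:
  fixes G :: "real^'m::finite^'m"
  assumes "\<forall>X. X \<noteq> 0 \<longrightarrow> X \<bullet> (G *v X) > 0"
  shows "G ** matrix_inv G = mat 1"
proof -
  have "\<forall>x. G *v x = 0 \<longrightarrow> x = 0" using assms by force
  then have "\<exists>B. B ** G = mat 1" by (simp add: matrix_left_invertible_ker)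
  then have "invertible G" by (simp add: invertible_left_inverse)
  then show ?thesis unfolding invertible_def matrix_inv_def by (rule someI2_ex) blast
qed

definition christoffel_first :: "(real^'m::finite \<Rightarrow> real^'m^'m) \<Rightarrow> real^'m \<Rightarrow> 'm \<Rightarrow> 'm \<Rightarrow> 'm \<Rightarrow> real" where
  "christoffel_first g p d a b =
     (1/2) * (pd a (\<lambda>q. g q $ d $ b) p + pd b (\<lambda>q. g q $ a $ d) p - pd d (\<lambda>q. g q $ a $ b) p)"

lemma christoffel_eq_raised:
  "christoffel g p c a b = (\<Sum>d\<in>UNIV. matrix_inv (g p) $ c $ d * christoffel_first g p d a b)"
  unfolding christoffel_def christoffel_first_def by (simp add: sum_distrib_left algebra_simps)

lemma christoffel_lowered:
  assumes "g p ** matrix_inv (g p) = mat 1"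
  shows "(\<Sum>c\<in>UNIV. g p $ e $ c * christoffel g p c a b) = christoffel_first g p e a b"
proof -
  have delta: "(\<Sum>c\<in>UNIV. g p $ e $ c * matrix_inv (g p) $ c $ d) = (if e = d then 1 else 0)" for d
    using arg_cong[OF assms, of "\<lambda>M. M $ e $ d"] by (simp add: matrix_matrix_mult_def mat_def)
  have "(\<Sum>c\<in>UNIV. g p $ e $ c * christoffel g p c a b)
      = (\<Sum>d\<in>UNIV. \<Sum>c\<in>UNIV. g p $ e $ c * matrix_inv (g p) $ c $ d * christoffel_first g p d a b)"
    by (simp only: christoffel_eq_raised sum_distrib_left mult.assoc) (rule sum.swap)
  also have "\<dots> = (\<Sum>d\<in>UNIV. (if e = d then 1 else 0) * christoffel_first g p d a b)"
    by (simp only: sum_distrib_right[symmetric] delta)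
  finally show ?thesis by (simp add: if_zero_mult)
qed

lemma pd_symmetric_entry:
  assumes "open U" "p \<in> U" "\<forall>q\<in>U. transpose (g q) = g q"
  shows "pd x (\<lambda>q. g q $ a $ b) p = pd x (\<lambda>q. g q $ b $ a) p"
  using assms by (intro pd_cong[of U]) (auto intro: symmetric_matrix_nth)

lemma christoffel_first_pair:
  assumes "open U" "p \<in> U" "\<forall>q\<in>U. transpose (g q) = g q"
  shows "christoffel_first g p d a c + christoffel_first g p c a d = pd a (\<lambda>q. g q $ c $ d) p"
  unfolding christoffel_first_def using pd_symmetric_entry[OF assms] by (simp add: algebra_simps)

lemma christoffel_sym:
  assumes "open U" "p \<in> U" "\<forall>q\<in>U. transpose (g q) = g q"
  shows "christoffel g p c a b = christoffel g p c b a"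
  unfolding christoffel_eq_raised christoffel_first_def
  using pd_symmetric_entry[OF assms] by (simp add: algebra_simps)

lemma lc_nabla_lowered:
  assumes "g p ** matrix_inv (g p) = mat 1"
  shows "(g p *v lc_nabla g p X Y) $ e
      = (\<Sum>c\<in>UNIV. g p $ e $ c * dir_deriv X (\<lambda>q. Y q $ c) p)
        + (\<Sum>a\<in>UNIV. \<Sum>b\<in>UNIV. christoffel_first g p e a b * X $ a * Y p $ b)"
proof -
  have "(\<Sum>c\<in>UNIV. g p $ e $ c * (\<Sum>a\<in>UNIV. \<Sum>b\<in>UNIV. christoffel g p c a b * X $ a * Y p $ b))
      = (\<Sum>c\<in>UNIV. \<Sum>a\<in>UNIV. \<Sum>b\<in>UNIV. g p $ e $ c * (christoffel g p c a b * X $ a * Y p $ b))"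
    by (simp only: sum_distrib_left)
  also have "\<dots> = (\<Sum>a\<in>UNIV. \<Sum>b\<in>UNIV. \<Sum>c\<in>UNIV. g p $ e $ c * (christoffel g p c a b * X $ a * Y p $ b))"
    by (rule sum_swap3)
  also have "\<dots> = (\<Sum>a\<in>UNIV. \<Sum>b\<in>UNIV. christoffel_first g p e a b * X $ a * Y p $ b)"
    by (simp only: sum_distrib_right mult.assoc christoffel_lowered[of g p, OF assms, symmetric])
  finally have "(\<Sum>c\<in>UNIV. g p $ e $ c * (\<Sum>a\<in>UNIV. \<Sum>b\<in>UNIV. christoffel g p c a b * X $ a * Y p $ b))
      = (\<Sum>a\<in>UNIV. \<Sum>b\<in>UNIV. christoffel_first g p e a b * X $ a * Y p $ b)" .
  then show ?thesis
    unfolding lc_nabla_def dir_deriv_def matrix_vector_mult_def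
    by (simp add: distrib_left sum.distrib)
qed

lemma lc_nabla_cong:
  assumes "open U" "p \<in> U" "\<forall>q\<in>U. Y q = Y' q"
  shows "lc_nabla g p X Y = lc_nabla g p X Y'"
proof -
  have "pd a (\<lambda>q. Y q $ c) p = pd a (\<lambda>q. Y' q $ c) p" for a c
    using assms by (intro pd_cong[of U]) auto
  moreover have "Y p = Y' p" using assms by auto
  ultimately show ?thesis unfolding lc_nabla_def by simp
qed

lemma lc_nabla_zero [simp]: "lc_nabla g p X (\<lambda>q. 0) = 0"
  unfolding lc_nabla_def by (simp add: vec_eq_iff)

lemma lc_nabla_torsion_free:
  assumes "open U" "p \<in> U" "\<forall>q\<in>U. transpose (g q) = g q"
  shows "lc_nabla g p (X p) Y - lc_nabla g p (Y p) X = lie_bracket X Y p"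
proof -
  have "(\<Sum>a\<in>UNIV. \<Sum>b\<in>UNIV. christoffel g p c a b * X p $ a * Y p $ b)
      = (\<Sum>a\<in>UNIV. \<Sum>b\<in>UNIV. christoffel g p c a b * Y p $ a * X p $ b)" for c
  proof -
    have "(\<Sum>a\<in>UNIV. \<Sum>b\<in>UNIV. christoffel g p c a b * X p $ a * Y p $ b)
       = (\<Sum>b\<in>UNIV. \<Sum>a\<in>UNIV. christoffel g p c a b * X p $ a * Y p $ b)" by (rule sum.swap)
    also have "\<dots> = (\<Sum>b\<in>UNIV. \<Sum>a\<in>UNIV. christoffel g p c b a * Y p $ b * X p $ a)"
      using christoffel_sym[OF assms] by (simp add: algebra_simps)
    finally show ?thesis .
  qed
  then show ?thesis unfolding lc_nabla_def lie_bracket_def dir_deriv_def by (simp add: vec_eq_iff)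
qed

lemma sum_dir_deriv_metric:
  fixes G :: "real^'m::finite^'m"
  assumes "transpose G = G"
  shows "(\<Sum>a\<in>UNIV. X $ a * (\<Sum>c\<in>UNIV. \<Sum>d\<in>UNIV. pd a (\<lambda>q. Y q $ c) p * G $ c $ d * w $ d))
       = (\<Sum>e\<in>UNIV. (\<Sum>c\<in>UNIV. G $ e $ c * dir_deriv X (\<lambda>q. Y q $ c) p) * w $ e)"
proof -
  have "(\<Sum>e\<in>UNIV. (\<Sum>c\<in>UNIV. G $ e $ c * dir_deriv X (\<lambda>q. Y q $ c) p) * w $ e)
      = (\<Sum>e\<in>UNIV. \<Sum>c\<in>UNIV. \<Sum>a\<in>UNIV. X $ a * (pd a (\<lambda>q. Y q $ c) p * G $ c $ e * w $ e))"
    using symmetric_matrix_nth[OF assms]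
    by (simp add: dir_deriv_def sum_distrib_left sum_distrib_right algebra_simps)
  also have "\<dots> = (\<Sum>c\<in>UNIV. \<Sum>a\<in>UNIV. \<Sum>e\<in>UNIV. X $ a * (pd a (\<lambda>q. Y q $ c) p * G $ c $ e * w $ e))"
    by (rule sum_swap3)
  also have "\<dots> = (\<Sum>a\<in>UNIV. \<Sum>c\<in>UNIV. \<Sum>e\<in>UNIV. X $ a * (pd a (\<lambda>q. Y q $ c) p * G $ c $ e * w $ e))"
    by (rule sum.swap)
  finally show ?thesis by (simp add: sum_distrib_left)
qed

lemma sum_christoffel_first:
  assumes "open U" "p \<in> U" "\<forall>q\<in>U. transpose (g q) = g q"
  shows "(\<Sum>a\<in>UNIV. X $ a * (\<Sum>c\<in>UNIV. \<Sum>d\<in>UNIV. y $ c * pd a (\<lambda>q. g q $ c $ d) p * w $ d))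
       = (\<Sum>e\<in>UNIV. (\<Sum>a\<in>UNIV. \<Sum>b\<in>UNIV. christoffel_first g p e a b * X $ a * y $ b) * w $ e)
       + (\<Sum>e\<in>UNIV. (\<Sum>a\<in>UNIV. \<Sum>b\<in>UNIV. christoffel_first g p e a b * X $ a * w $ b) * y $ e)"
proof -
  have "(\<Sum>e\<in>UNIV. (\<Sum>a\<in>UNIV. \<Sum>b\<in>UNIV. christoffel_first g p e a b * X $ a * y $ b) * w $ e)
      = (\<Sum>d\<in>UNIV. \<Sum>a\<in>UNIV. \<Sum>c\<in>UNIV. X $ a * (y $ c * christoffel_first g p d a c * w $ d))"
    by (simp add: sum_distrib_left sum_distrib_right algebra_simps)
  also have "\<dots> = (\<Sum>a\<in>UNIV. \<Sum>c\<in>UNIV. \<Sum>d\<in>UNIV. X $ a * (y $ c * christoffel_first g p d a c * w $ d))"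
    by (rule sum_swap3)
  finally have first: "(\<Sum>e\<in>UNIV. (\<Sum>a\<in>UNIV. \<Sum>b\<in>UNIV. christoffel_first g p e a b * X $ a * y $ b) * w $ e)
      = (\<Sum>a\<in>UNIV. \<Sum>c\<in>UNIV. \<Sum>d\<in>UNIV. X $ a * (y $ c * christoffel_first g p d a c * w $ d))" .
  have "(\<Sum>e\<in>UNIV. (\<Sum>a\<in>UNIV. \<Sum>b\<in>UNIV. christoffel_first g p e a b * X $ a * w $ b) * y $ e)
      = (\<Sum>c\<in>UNIV. \<Sum>a\<in>UNIV. \<Sum>d\<in>UNIV. X $ a * (y $ c * christoffel_first g p c a d * w $ d))"
    by (simp add: sum_distrib_left sum_distrib_right algebra_simps)
  also have "\<dots> = (\<Sum>a\<in>UNIV. \<Sum>c\<in>UNIV. \<Sum>d\<in>UNIV. X $ a * (y $ c * christoffel_first g p c a d * w $ d))"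
    by (rule sum.swap)
  finally have second: "(\<Sum>e\<in>UNIV. (\<Sum>a\<in>UNIV. \<Sum>b\<in>UNIV. christoffel_first g p e a b * X $ a * w $ b) * y $ e)
      = (\<Sum>a\<in>UNIV. \<Sum>c\<in>UNIV. \<Sum>d\<in>UNIV. X $ a * (y $ c * christoffel_first g p c a d * w $ d))" .
  have "X $ a * (y $ c * christoffel_first g p d a c * w $ d) + X $ a * (y $ c * christoffel_first g p c a d * w $ d)
      = X $ a * (y $ c * pd a (\<lambda>q. g q $ c $ d) p * w $ d)" for a c d
    unfolding christoffel_first_pair[OF assms, symmetric] by (simp add: algebra_simps)
  then show ?thesis unfolding first second sum.distrib[symmetric] by (simp add: sum_distrib_left)
qed

lemma lc_nabla_metric_compat:
  fixes g :: "real^'m::finite \<Rightarrow> real^'m^'m"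
  assumes U: "open U" "p \<in> U" and S: "\<forall>q\<in>U. transpose (g q) = g q"
    and Dg: "\<And>c d. (\<lambda>q. g q $ c $ d) differentiable at p"
    and DY: "\<And>c. (\<lambda>q. Y q $ c) differentiable at p"
    and DW: "\<And>c. (\<lambda>q. W q $ c) differentiable at p"
    and inv: "g p ** matrix_inv (g p) = mat 1"
  shows "dir_deriv X (\<lambda>q. metric g q (Y q) (W q)) p
       = metric g p (lc_nabla g p X Y) (W p) + metric g p (Y p) (lc_nabla g p X W)"
proof -
  have Sp: "transpose (g p) = g p" using S U by auto
  have product_rule: "pd a (\<lambda>q. metric g q (Y q) (W q)) p = (\<Sum>c\<in>UNIV. \<Sum>d\<in>UNIV.
       pd a (\<lambda>q. Y q $ c) p * g p $ c $ d * W p $ d + Y p $ c * pd a (\<lambda>q. g q $ c $ d) p * W p $ d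
       + Y p $ c * g p $ c $ d * pd a (\<lambda>q. W q $ d) p)" for a
    unfolding metric_expand using DY DW Dg by (simp add: pd_sum pd_mult algebra_simps)
  have W_term: "(\<Sum>c\<in>UNIV. \<Sum>d\<in>UNIV. Y p $ c * g p $ c $ d * pd a (\<lambda>q. W q $ d) p)
      = (\<Sum>d\<in>UNIV. \<Sum>c\<in>UNIV. pd a (\<lambda>q. W q $ d) p * g p $ d $ c * Y p $ c)" for a
    using symmetric_matrix_nth[OF Sp] by (subst sum.swap) (simp add: algebra_simps)
  have "dir_deriv X (\<lambda>q. metric g q (Y q) (W q)) p
     = (\<Sum>a\<in>UNIV. X $ a * (\<Sum>c\<in>UNIV. \<Sum>d\<in>UNIV. pd a (\<lambda>q. Y q $ c) p * g p $ c $ d * W p $ d))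
     + (\<Sum>a\<in>UNIV. X $ a * (\<Sum>c\<in>UNIV. \<Sum>d\<in>UNIV. Y p $ c * pd a (\<lambda>q. g q $ c $ d) p * W p $ d))
     + (\<Sum>a\<in>UNIV. X $ a * (\<Sum>d\<in>UNIV. \<Sum>c\<in>UNIV. pd a (\<lambda>q. W q $ d) p * g p $ d $ c * Y p $ c))"
    unfolding dir_deriv_def product_rule W_term[symmetric] by (simp add: sum.distrib distrib_left)
  also have "\<dots> = metric g p (lc_nabla g p X Y) (W p) + metric g p (Y p) (lc_nabla g p X W)"
    unfolding metric_sym[of g p "Y p", OF Sp]
    unfolding sum_dir_deriv_metric[OF Sp] sum_christoffel_first[OF U S]
      metric_lowered[of g p, OF Sp] lc_nabla_lowered[of g p, OF inv]
    by (simp add: sum.distrib distrib_right)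
  finally show ?thesis .
qed

lemma lc_nabla_koszul:
  fixes g :: "real^'m::finite \<Rightarrow> real^'m^'m"
  assumes U: "open U" "p \<in> U" and S: "\<forall>q\<in>U. transpose (g q) = g q"
    and Dg: "\<And>c d. (\<lambda>q. g q $ c $ d) differentiable at p"
    and DX: "\<And>c. (\<lambda>q. X q $ c) differentiable at p"
    and DY: "\<And>c. (\<lambda>q. Y q $ c) differentiable at p"
    and DW: "\<And>c. (\<lambda>q. W q $ c) differentiable at p"
    and inv: "g p ** matrix_inv (g p) = mat 1"
    and XY: "lie_bracket X Y p = 0" and XW: "lie_bracket X W p = 0" and YW: "lie_bracket Y W p = 0"
  shows "metric g p (W p) (lc_nabla g p (X p) Y)
       = (1/2) * (dir_deriv (X p) (\<lambda>q. metric g q (W q) (Y q)) p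
                 + dir_deriv (Y p) (\<lambda>q. metric g q (X q) (W q)) p
                 - dir_deriv (W p) (\<lambda>q. metric g q (X q) (Y q)) p)"
proof -
  have sym: "metric g p u v = metric g p v u" for u v
    using S U by (intro metric_sym) auto
  have "lc_nabla g p (X p) Y = lc_nabla g p (Y p) X" "lc_nabla g p (X p) W = lc_nabla g p (W p) X"
    "lc_nabla g p (Y p) W = lc_nabla g p (W p) Y"
    using lc_nabla_torsion_free[OF U S] XY XW YW by (metis eq_iff_diff_eq_0)+
  with sym show ?thesis
    unfolding lc_nabla_metric_compat[OF U S Dg DW DY inv] lc_nabla_metric_compat[OF U S Dg DX DW inv]
      lc_nabla_metric_compat[OF U S Dg DX DY inv]
    by (simp add: algebra_simps)
qed

lemma delta_field_nth:
  "delta_field z eta i q $ c = (if c = i then 1 else 0) - eta q $ i * (if c = z then 1 else 0)"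
  unfolding delta_field_def by (simp add: axis_one_nth cart_eq_inner_axis[symmetric])

lemma delta_field_differentiable:
  "(\<lambda>q. eta q $ i) differentiable at p \<Longrightarrow> (\<lambda>q. delta_field z eta i q $ c) differentiable at p"
  unfolding delta_field_nth by simp

lemma pd_delta_field:
  assumes "(\<lambda>q. eta q $ i) differentiable at p"
  shows "pd a (\<lambda>q. delta_field z eta i q $ c) p = - pd a (\<lambda>q. eta q $ i) p * (if c = z then 1 else 0)"
  unfolding delta_field_nth using assms by (simp add: pd_diff pd_mult)

lemma delta_deriv_eq_dir_deriv: "delta_deriv z eta i f p = dir_deriv (delta_field z eta i p) f p"
  unfolding delta_deriv_def dir_deriv_def delta_field_nth
  by (simp add: left_diff_distrib sum_subtractf sum_distrib_left if_zero_mult mult.assoc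
      cart_eq_inner_axis[symmetric])

lemma lie_bracket_delta_fields:
  assumes "\<And>c. (\<lambda>q. eta q $ c) differentiable at p"
  shows "lie_bracket (delta_field z eta i) (delta_field z eta j) p
       = (delta_deriv z eta j (\<lambda>q. eta q $ i) p - delta_deriv z eta i (\<lambda>q. eta q $ j) p) *\<^sub>R axis z 1"
  unfolding lie_bracket_def delta_deriv_eq_dir_deriv dir_deriv_def pd_delta_field[OF assms]
  by (simp add: vec_eq_iff axis_one_nth sum_distrib_right sum_negf)

lemma lie_bracket_axis_delta_field:
  assumes "(\<lambda>q. eta q $ i) differentiable at p"
  shows "lie_bracket (\<lambda>q. axis z 1) (delta_field z eta i) p = - pd z (\<lambda>q. eta q $ i) p *\<^sub>R axis z 1"
  unfolding lie_bracket_def dir_deriv_axis pd_delta_field[OF assms]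
  by (simp add: vec_eq_iff axis_one_nth)

lemma delta_frame_decomp:
  fixes v :: "real^'m::finite"
  assumes "eta p $ z = 1"
  shows "v = (\<Sum>k\<in>UNIV - {z}. v $ k *\<^sub>R delta_field z eta k p) + (eta p \<bullet> v) *\<^sub>R axis z 1"
proof (subst vec_eq_iff, intro allI)
  fix c
  have split_z: "(\<Sum>a\<in>UNIV. f a) = f z + (\<Sum>a\<in>UNIV - {z}. f a)" for f :: "'m \<Rightarrow> real"
    by (simp add: sum.remove)
  show "v $ c = ((\<Sum>k\<in>UNIV - {z}. v $ k *\<^sub>R delta_field z eta k p) + (eta p \<bullet> v) *\<^sub>R axis z 1) $ c"
  proof (cases "c = z")
    case True
    then show ?thesis
      using assms by (simp add: sum_component delta_field_nth inner_vec_def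
          split_z[of "\<lambda>a. v $ a * eta p $ a"] sum_negf mult.commute)
  next
    case False
    then show ?thesis
      by (simp add: sum_component delta_field_nth axis_one_nth if_distrib[of "\<lambda>x. _ * x"] cong: if_cong)
  qed
qed

locale kenmotsu_chart =
  fixes U :: "(real^'m::finite) set" and phi :: "real^'m \<Rightarrow> real^'m^'m"
    and xi eta :: "real^'m \<Rightarrow> real^'m" and g :: "real^'m \<Rightarrow> real^'m^'m"
  assumes open_U: "open U" and kenmotsu: "kenmotsu U phi xi eta g"
begin

lemma almost_contact_metric: "almost_contact_metric U phi xi eta g"
  using kenmotsu unfolding kenmotsu_def by blast

lemma g_symmetric: "\<forall>q\<in>U. transpose (g q) = g q"
  using almost_contact_metric unfolding almost_contact_metric_def riemannian_metric_def by blast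

lemma metric_commute: "p \<in> U \<Longrightarrow> metric g p u v = metric g p v u"
  using g_symmetric by (intro metric_sym) auto

lemma g_right_inverse: "p \<in> U \<Longrightarrow> g p ** matrix_inv (g p) = mat 1"
  using almost_contact_metric unfolding almost_contact_metric_def riemannian_metric_def metric_def
  by (intro positive_definite_right_inverse) blast

lemma g_differentiable: "p \<in> U \<Longrightarrow> (\<lambda>q. g q $ c $ d) differentiable at p"
  using almost_contact_metric
  unfolding almost_contact_metric_def riemannian_metric_def smooth_tensor_def
  by (blast intro: smooth_fun_differentiable)

lemma smooth_field_xi: "smooth_field U xi"
  using almost_contact_metric unfolding almost_contact_metric_def by blast

lemma xi_differentiable: "p \<in> U \<Longrightarrow> (\<lambda>q. xi q $ c) differentiable at p"
  using smooth_field_xi unfolding smooth_field_def by (blast intro: smooth_fun_differentiable)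

lemma eta_differentiable: "p \<in> U \<Longrightarrow> (\<lambda>q. eta q $ c) differentiable at p"
  using almost_contact_metric unfolding almost_contact_metric_def smooth_field_def
  by (blast intro: smooth_fun_differentiable)

lemma phi_phi: "p \<in> U \<Longrightarrow> phi p *v (phi p *v X) = - X + (eta p \<bullet> X) *\<^sub>R xi p"
  and eta_xi: "p \<in> U \<Longrightarrow> eta p \<bullet> xi p = 1"
  and eta_phi: "p \<in> U \<Longrightarrow> eta p \<bullet> (phi p *v X) = 0"
  and phi_xi: "p \<in> U \<Longrightarrow> phi p *v xi p = 0"
  and eta_eq_metric_xi: "p \<in> U \<Longrightarrow> eta p \<bullet> X = metric g p (xi p) X"
  using almost_contact_metric unfolding almost_contact_metric_def by blast+

lemma nabla_phi:
  "p \<in> U \<Longrightarrow> smooth_field U Y \<Longrightarrow>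
     lc_nabla g p X (\<lambda>q. phi q *v Y q) - phi p *v lc_nabla g p X Y
       = metric g p (phi p *v X) (Y p) *\<^sub>R xi p - (eta p \<bullet> Y p) *\<^sub>R (phi p *v X)"
  using kenmotsu unfolding kenmotsu_def by blast

lemma metric_compat:
  assumes "p \<in> U" "\<And>c. (\<lambda>q. Y q $ c) differentiable at p" "\<And>c. (\<lambda>q. W q $ c) differentiable at p"
  shows "dir_deriv X (\<lambda>q. metric g q (Y q) (W q)) p
       = metric g p (lc_nabla g p X Y) (W p) + metric g p (Y p) (lc_nabla g p X W)"
  by (rule lc_nabla_metric_compat[OF open_U assms(1) g_symmetric g_differentiable[OF assms(1)]
      assms(2,3) g_right_inverse[OF assms(1)]])

text \<open>The Kenmotsu condition with Y = \<xi> gives \<phi>(\<nabla>_X \<xi>) = \<phi> X, so \<nabla>_X \<xi> - X is a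
  multiple of \<xi>; the multiple is fixed by g(\<xi>, \<nabla>_X \<xi>) = X(g(\<xi>, \<xi>))/2 = 0.\<close>
lemma nabla_xi:
  assumes p: "p \<in> U"
  shows "lc_nabla g p X xi = X - (eta p \<bullet> X) *\<^sub>R xi p"
proof -
  define N where "N = lc_nabla g p X xi"
  have "lc_nabla g p X (\<lambda>q. phi q *v xi q) = 0"
    using lc_nabla_cong[OF open_U p, of "\<lambda>q. phi q *v xi q" "\<lambda>q. 0"] phi_xi by simp
  moreover have "metric g p (phi p *v X) (xi p) = 0"
    using metric_commute eta_eq_metric_xi eta_phi p by metis
  ultimately have "phi p *v N = phi p *v X"
    using nabla_phi[OF p smooth_field_xi, of X] eta_xi[OF p] unfolding N_def by simp
  then have "phi p *v (phi p *v (N - X)) = 0" by (simp add: matrix_vector_mult_diff_distrib)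
  then have NX: "N - X = (eta p \<bullet> (N - X)) *\<^sub>R xi p"
    unfolding phi_phi[OF p] by (simp add: eq_neg_iff_add_eq_0[symmetric] add.commute)
      (metis minus_diff_eq neg_equal_iff_equal)
  have "2 * (eta p \<bullet> N) = metric g p N (xi p) + metric g p (xi p) N"
    using metric_commute[OF p, of N "xi p"] eta_eq_metric_xi[OF p, of N] by simp
  also have "\<dots> = dir_deriv X (\<lambda>q. metric g q (xi q) (xi q)) p"
    unfolding N_def by (rule metric_compat[OF p xi_differentiable[OF p] xi_differentiable[OF p], symmetric])
  also have "\<dots> = dir_deriv X (\<lambda>q. 1) p"
    using eta_xi eta_eq_metric_xi by (intro dir_deriv_cong[OF open_U p]) metis
  finally have "eta p \<bullet> N = 0" by simp
  with NX show ?thesis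
    unfolding N_def[symmetric] by (simp add: inner_diff_right algebra_simps)
qed

lemma eta_nabla:
  assumes p: "p \<in> U" and DY: "\<And>c. (\<lambda>q. Y q $ c) differentiable at p"
  shows "eta p \<bullet> lc_nabla g p X Y
       = dir_deriv X (\<lambda>q. eta q \<bullet> Y q) p - metric g p X (Y p) + (eta p \<bullet> X) * (eta p \<bullet> Y p)"
proof -
  have "dir_deriv X (\<lambda>q. eta q \<bullet> Y q) p = dir_deriv X (\<lambda>q. metric g q (xi q) (Y q)) p"
    using eta_eq_metric_xi by (intro dir_deriv_cong[OF open_U p]) metis
  also have "\<dots> = metric g p (lc_nabla g p X xi) (Y p) + metric g p (xi p) (lc_nabla g p X Y)"
    by (rule metric_compat[OF p xi_differentiable[OF p] DY])
  also have "\<dots> = metric g p X (Y p) - (eta p \<bullet> X) * (eta p \<bullet> Y p) + eta p \<bullet> lc_nabla g p X Y"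
    unfolding nabla_xi[OF p] metric_diff_left metric_scale_left eta_eq_metric_xi[OF p, symmetric] ..
  finally show ?thesis by simp
qed

text \<open>d\<eta> = 0, because \<partial>_a \<eta>_d = \<eta>(\<nabla>_a \<partial>_d) + g_ad - \<eta>_a \<eta>_d is symmetric in a and d.\<close>
lemma eta_closed:
  assumes p: "p \<in> U"
  shows "pd a (\<lambda>q. eta q $ d) p = pd d (\<lambda>q. eta q $ a) p"
proof -
  have pd_eta: "pd a (\<lambda>q. eta q $ d) p
      = eta p \<bullet> lc_nabla g p (axis a 1) (\<lambda>q. axis d 1) + g p $ a $ d - eta p $ a * eta p $ d" for a d
    using eta_nabla[OF p, of "\<lambda>q. axis d 1" "axis a 1"]
    by (simp add: dir_deriv_axis metric_axis_axis cart_eq_inner_axis[symmetric])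
  have "lc_nabla g p (axis a 1) (\<lambda>q. axis d 1) = lc_nabla g p (axis d 1) (\<lambda>q. axis a 1)"
    using lc_nabla_torsion_free[OF open_U p g_symmetric, of "\<lambda>q. axis a 1" "\<lambda>q. axis d 1"] by simp
  moreover have "g p $ a $ d = g p $ d $ a"
    using g_symmetric p by (blast intro: symmetric_matrix_nth)
  ultimately show ?thesis unfolding pd_eta by simp
qed

end

locale adapted_kenmotsu_chart = kenmotsu_chart +
  fixes z :: "'m::finite"
  assumes xi_axis: "\<forall>p\<in>U. xi p = axis z 1"
begin

lemma eta_z_eq_1: "p \<in> U \<Longrightarrow> eta p $ z = 1"
  using eta_xi xi_axis by (simp add: cart_eq_inner_axis)

lemma eta_delta_field: "p \<in> U \<Longrightarrow> eta p \<bullet> delta_field z eta i p = 0"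
  unfolding delta_field_def using eta_z_eq_1
  by (simp add: inner_diff_right cart_eq_inner_axis[symmetric])

lemma pd_z_eta:
  assumes p: "p \<in> U"
  shows "pd z (\<lambda>q. eta q $ i) p = 0"
proof -
  have "pd i (\<lambda>q. eta q $ z) p = pd i (\<lambda>q. 1) p"
    using eta_z_eq_1 by (intro pd_cong[OF open_U p]) auto
  then show ?thesis using eta_closed[OF p, of z i] by simp
qed

lemma lie_bracket_delta_fields_eq_0:
  assumes p: "p \<in> U"
  shows "lie_bracket (delta_field z eta i) (delta_field z eta j) p = 0"
  unfolding lie_bracket_delta_fields[OF eta_differentiable[OF p]] delta_deriv_def pd_z_eta[OF p]
  using eta_closed[OF p, of i j] by simp

lemma lie_bracket_axis_delta_field_eq_0:
  "p \<in> U \<Longrightarrow> lie_bracket (\<lambda>q. axis z 1) (delta_field z eta i) p = 0"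
  by (simp add: lie_bracket_axis_delta_field eta_differentiable pd_z_eta)

lemma nabla_axis_eq:
  assumes p: "p \<in> U"
  shows "lc_nabla g p X (\<lambda>q. axis z 1) = X - (eta p \<bullet> X) *\<^sub>R axis z 1"
proof -
  have "lc_nabla g p X (\<lambda>q. axis z 1) = lc_nabla g p X xi"
    by (rule lc_nabla_cong[OF open_U p]) (simp add: xi_axis)
  then show ?thesis using nabla_xi[OF p] xi_axis p by simp
qed

lemma nabla_axis_axis: "p \<in> U \<Longrightarrow> lc_nabla g p (axis z 1) (\<lambda>q. axis z 1) = 0"
  by (simp add: nabla_axis_eq eta_z_eq_1 cart_eq_inner_axis[symmetric])

lemma nabla_delta_field_axis:
  "p \<in> U \<Longrightarrow> lc_nabla g p (delta_field z eta i p) (\<lambda>q. axis z 1) = delta_field z eta i p"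
  by (simp add: nabla_axis_eq eta_delta_field)

lemma nabla_axis_delta_field:
  assumes p: "p \<in> U"
  shows "lc_nabla g p (axis z 1) (delta_field z eta i) = delta_field z eta i p"
  using lc_nabla_torsion_free[OF open_U p g_symmetric, of "\<lambda>q. axis z 1" "delta_field z eta i"]
  by (simp add: lie_bracket_axis_delta_field_eq_0[OF p] nabla_delta_field_axis[OF p])

lemma eta_nabla_delta_fields:
  assumes p: "p \<in> U"
  shows "eta p \<bullet> lc_nabla g p (delta_field z eta i p) (delta_field z eta j) = - gbar z eta g p i j"
proof -
  have "dir_deriv (delta_field z eta i p) (\<lambda>q. eta q \<bullet> delta_field z eta j q) p
      = dir_deriv (delta_field z eta i p) (\<lambda>q. 0) p"
    using eta_delta_field by (intro dir_deriv_cong[OF open_U p]) auto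
  then show ?thesis
    using eta_nabla[OF p delta_field_differentiable[OF eta_differentiable[OF p]]]
    by (simp add: eta_delta_field[OF p] gbar_def)
qed

lemma koszul_delta_fields:
  assumes p: "p \<in> U"
  shows "metric g p (delta_field z eta l p) (lc_nabla g p (delta_field z eta i p) (delta_field z eta j))
       = (1/2) * (delta_deriv z eta i (\<lambda>q. gbar z eta g q l j) p
                 + delta_deriv z eta j (\<lambda>q. gbar z eta g q i l) p
                 - delta_deriv z eta l (\<lambda>q. gbar z eta g q i j) p)"
proof -
  have D: "(\<lambda>q. delta_field z eta k q $ c) differentiable at p" for k c
    by (rule delta_field_differentiable[OF eta_differentiable[OF p]])
  show ?thesis
    unfolding delta_deriv_eq_dir_deriv gbar_def
    by (rule lc_nabla_koszul[OF open_U p g_symmetric g_differentiable[OF p] D D D g_right_inverse[OF p]])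
      (rule lie_bracket_delta_fields_eq_0[OF p])+
qed

lemma metric_delta_field_left:
  assumes p: "p \<in> U"
  shows "metric g p (delta_field z eta l p) v = (\<Sum>k\<in>UNIV - {z}. gbar z eta g p l k * v $ k)"
proof -
  have "metric g p (delta_field z eta l p) (axis z 1) = 0"
    using metric_commute[OF p] eta_eq_metric_xi[OF p] xi_axis eta_delta_field[OF p] p by metis
  then show ?thesis
    by (subst delta_frame_decomp[where eta = eta and p = p, OF eta_z_eq_1[OF p], of v])
      (simp add: metric_add_right metric_scale_right metric_sum_right gbar_def mult.commute)
qed

lemma nabla_delta_fields:
  assumes p: "p \<in> U"
    and ginv: "\<forall>k\<in>UNIV - {z}. \<forall>j\<in>UNIV - {z}.
                 (\<Sum>l\<in>UNIV - {z}. ginv p k l * gbar z eta g p l j) = (if k = j then 1 else 0)"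
  shows "lc_nabla g p (delta_field z eta i p) (delta_field z eta j)
       = (\<Sum>k\<in>UNIV - {z}. Gamma_adapted z eta g ginv p i j k *\<^sub>R delta_field z eta k p)
         - gbar z eta g p i j *\<^sub>R axis z 1"
proof -
  define V where "V = lc_nabla g p (delta_field z eta i p) (delta_field z eta j)"
  have "Gamma_adapted z eta g ginv p i j k = V $ k" if k: "k \<in> UNIV - {z}" for k
  proof -
    have "Gamma_adapted z eta g ginv p i j k
        = (\<Sum>l\<in>UNIV - {z}. ginv p k l * metric g p (delta_field z eta l p) V)"
      unfolding Gamma_adapted_def V_def koszul_delta_fields[OF p]
      by (simp add: sum_distrib_left algebra_simps)
    also have "\<dots> = (\<Sum>k'\<in>UNIV - {z}. (\<Sum>l\<in>UNIV - {z}. ginv p k l * gbar z eta g p l k') * V $ k')"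
      unfolding metric_delta_field_left[OF p] sum_distrib_left sum_distrib_right mult.assoc
      by (rule sum.swap)
    also have "\<dots> = (\<Sum>k'\<in>UNIV - {z}. (if k = k' then 1 else 0) * V $ k')"
      using ginv k by (intro sum.cong refl) auto
    also have "\<dots> = V $ k" using k by (simp add: if_zero_mult)
    finally show ?thesis .
  qed
  then have "(\<Sum>k\<in>UNIV - {z}. Gamma_adapted z eta g ginv p i j k *\<^sub>R delta_field z eta k p)
        - gbar z eta g p i j *\<^sub>R axis z 1
      = (\<Sum>k\<in>UNIV - {z}. V $ k *\<^sub>R delta_field z eta k p) + (eta p \<bullet> V) *\<^sub>R axis z 1"
    unfolding V_def eta_nabla_delta_fields[OF p] by simp
  also have "\<dots> = V" by (rule delta_frame_decomp[where eta = eta and p = p, OF eta_z_eq_1[OF p], symmetric])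
  finally show ?thesis unfolding V_def ..
qed

end

theorem theorem1:
  fixes n :: nat and z :: "'m::finite" and U :: "(real^'m) set"
    and phi :: "real^'m \<Rightarrow> real^'m^'m" and xi eta :: "real^'m \<Rightarrow> real^'m"
    and g :: "real^'m \<Rightarrow> real^'m^'m" and ginv :: "real^'m \<Rightarrow> 'm \<Rightarrow> 'm \<Rightarrow> real"
  assumes dim: "CARD('m) = 2 * n + 1"
    and U_open: "open U"
    and K: "kenmotsu U phi xi eta g"
    and adapted: "\<forall>p\<in>U. xi p = axis z 1"
    and ginv: "\<forall>p\<in>U. \<forall>k\<in>UNIV - {z}. \<forall>j\<in>UNIV - {z}.
                 (\<Sum>l\<in>UNIV - {z}. ginv p k l * gbar z eta g p l j) = (if k = j then 1 else 0)
               \<and> (\<Sum>l\<in>UNIV - {z}. gbar z eta g p k l * ginv p l j) = (if k = j then 1 else 0)"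
  shows "\<forall>p\<in>U.
     (\<forall>i\<in>UNIV - {z}. \<forall>j\<in>UNIV - {z}.
        lc_nabla g p (delta_field z eta i p) (delta_field z eta j)
          = (\<Sum>k\<in>UNIV - {z}. Gamma_adapted z eta g ginv p i j k *\<^sub>R delta_field z eta k p)
            - gbar z eta g p i j *\<^sub>R axis z 1)
   \<and> (\<forall>i\<in>UNIV - {z}.
        lc_nabla g p (axis z 1) (delta_field z eta i) = delta_field z eta i p
      \<and> lc_nabla g p (delta_field z eta i p) (\<lambda>q. axis z 1) = delta_field z eta i p)
   \<and> lc_nabla g p (axis z 1) (\<lambda>q. axis z 1) = 0"
proof -
  interpret adapted_kenmotsu_chart U phi xi eta g z
    using U_open K adapted by unfold_locales
  have "lc_nabla g p (delta_field z eta i p) (delta_field z eta j)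
      = (\<Sum>k\<in>UNIV - {z}. Gamma_adapted z eta g ginv p i j k *\<^sub>R delta_field z eta k p)
        - gbar z eta g p i j *\<^sub>R axis z 1" if "p \<in> U" for p i j
    using that ginv by (intro nabla_delta_fields) auto
  then show ?thesis
    using nabla_axis_delta_field nabla_delta_field_axis nabla_axis_axis by auto
qed

end
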